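(* Let $T>0$, $N=2$, $M=2$. Consider the problem of minimizing $\mathbb V(T)=\frac12(\xi_1(T)^2+\xi_2(T)^2)$ over $\alpha\in\mathcal U_2$, where $\dot\xi_i=-\xi_i+(1-\alpha_i)\bar\xi$ ($i=1,2$), $\bar\xi=\frac12(\xi_1+\xi_2)$, with initial datum satisfying $\bar\xi(0)>0$ and $\xi_1(0)>\xi_2(0)$. Let $\alpha\in\mathcal U_2$ be an optimal control whose trajectory $\xi$ satisfies $\xi_1(t)\ge\xi_2(t)$ for all $t\in[0,T]$. Define $t_0=2\ln\big(\xi_1(0)/(2\bar\xi(0))\big)$. Then: (i) If $\xi_2(0)>0$, then $(\alpha_1,\alpha_2)\equiv(1,1)$. (ii) If $\xi_2(0)\le0$ and $T\ge t_0$, then $\xi_2(T)=0$ and $\alpha_1\equiv1$; for instance the control $(\alpha_1,\alpha_2)=(1,0)$ on $[0,t_0)$ and $(1,1)$ on $[t_0,T]$ is optimal. Furthermore, if there exists $\bar t\in[0,T)$ with $\xi_2(\bar t)=0$, then $\xi_2(t)=0$ for all $t\in[\bar t,T]$. (iii) If $\xi_2(0)\le0$ and $T<t_0$, then there exists $t^*\in[0,T)$ such that $\alpha(t)=(0,0)$ for all $t\in[0,t^* )$ and $\alpha(t)=(1,0)$ for all $t\in[t^*,T]$.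
   Context: $\mathcal U_2$ is the set of measurable $\alpha:[0,T]\to[0,1]^2$ with $\alpha_1(t)+\alpha_2(t)\le2$ for all $t$. *)

theory Defs
  imports "HOL-Analysis.Analysis"
begin

text \<open>The admissible control set U_2 (M = 2): measurable maps [0,T] -> [0,1]^2
  with alpha_1 + alpha_2 <= 2.  Values outside [0,T] are irrelevant.\<close>
definition admissible :: "real \<Rightarrow> (real \<Rightarrow> real \<times> real) \<Rightarrow> bool" where
  "admissible T \<alpha> \<longleftrightarrow>
     \<alpha> \<in> borel_measurable (restrict_space lebesgue {0..T}) \<and>
     (\<forall>t\<in>{0..T}. 0 \<le> fst (\<alpha> t) \<and> fst (\<alpha> t) \<le> 1 \<and> 0 \<le> snd (\<alpha> t) \<and> snd (\<alpha> t) \<le> 1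
                 \<and> fst (\<alpha> t) + snd (\<alpha> t) \<le> 2)"

definition mean :: "real \<times> real \<Rightarrow> real" where
  "mean x = (fst x + snd x) / 2"

definition dyn :: "real \<times> real \<Rightarrow> real \<times> real \<Rightarrow> real \<times> real" where
  "dyn a x = (- fst x + (1 - fst a) * mean x, - snd x + (1 - snd a) * mean x)"

text \<open>xi is the (Caratheodory / integral-equation) solution on [0,T] with control alpha
  and initial datum x0.\<close>
definition trajectory :: "real \<Rightarrow> (real \<Rightarrow> real \<times> real) \<Rightarrow> real \<times> real \<Rightarrow> (real \<Rightarrow> real \<times> real) \<Rightarrow> bool" where
  "trajectory T \<alpha> x0 \<xi> \<longleftrightarrow> \<xi> 0 = x0 \<and>
     (\<forall>t\<in>{0..T}. ((\<lambda>s. dyn (\<alpha> s) (\<xi> s)) has_integral (\<xi> t - x0)) {0..t})"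

definition cost :: "real \<Rightarrow> (real \<Rightarrow> real \<times> real) \<Rightarrow> real" where
  "cost T \<xi> = (fst (\<xi> T) ^ 2 + snd (\<xi> T) ^ 2) / 2"

definition optimal :: "real \<Rightarrow> real \<times> real \<Rightarrow> (real \<Rightarrow> real \<times> real) \<Rightarrow> (real \<Rightarrow> real \<times> real) \<Rightarrow> bool" where
  "optimal T x0 \<alpha> \<xi> \<longleftrightarrow> admissible T \<alpha> \<and> trajectory T \<alpha> x0 \<xi> \<and>
     (\<forall>\<beta> \<eta>. admissible T \<beta> \<longrightarrow> trajectory T \<beta> x0 \<eta> \<longrightarrow> cost T \<xi> \<le> cost T \<eta>)"

end

theory Submission
  imports Defs
begin

text \<open>
  Along every admissible trajectory the mean \<open>m(t) = (\<xi>\<^sub>1(t) + \<xi>\<^sub>2(t))/2\<close> stays positive and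
  does not increase, and since \<open>(exp t \<cdot> \<xi>\<^sub>i(t))' = exp t \<cdot> (1 - \<alpha>\<^sub>i(t)) m(t) \<ge> 0\<close> we get
  \<open>\<xi>\<^sub>i(T) \<ge> exp (-T) \<xi>\<^sub>i(0)\<close>, with equality only if \<open>\<alpha>\<^sub>i = 1\<close> almost everywhere.
  (i) If both initial components are positive, the control \<open>(1,1)\<close> attains both bounds, so an
  optimal control must attain them too.
  (ii) For a long horizon the explicit switching control drives \<open>\<xi>\<^sub>2\<close> to \<open>0\<close> at time \<open>t\<^sub>0\<close> while
  keeping \<open>\<xi>\<^sub>1(T) = exp (-T) \<xi>\<^sub>1(0)\<close>, so it minimises \<open>\<xi>\<^sub>1(T)\<^sup>2\<close> and \<open>\<xi>\<^sub>2(T)\<^sup>2\<close> separately.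
  (iii) For a short horizon, write the cost as \<open>m(T)\<^sup>2 + (\<xi>\<^sub>1(T) - \<xi>\<^sub>2(T))\<^sup>2/4\<close> and compare with
  the controls that are \<open>(0,0)\<close> up to a switching time \<open>\<tau>\<close> and \<open>(1,0)\<close> afterwards.  Choose
  \<open>\<tau>\<^sup>*\<close> so that this competitor has the same terminal mean.  Two integral identities with
  nonnegative integrands, whose weights come from the costate of the competitor, show that the
  competitor's terminal difference is at most ours; optimality forces equality, hence the
  integrands vanish, and this determines \<open>\<alpha>\<close> almost everywhere.
\<close>

section \<open>Integration lemmas\<close>

lemma has_integral_subinterval_of_primitive:
  fixes f :: "real \<Rightarrow> 'a::banach"
  assumes "\<And>t. t \<in> {a..b} \<Longrightarrow> (f has_integral (F t - F a)) {a..t}"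
    and "a \<le> t" "t \<le> x" "x \<le> b"
  shows "(f has_integral (F x - F t)) {t..x}"
proof -
  have fx: "(f has_integral (F x - F a)) {a..x}" and ft: "(f has_integral (F t - F a)) {a..t}"
    using assms by auto
  have "integral {a..t} f + integral {t..x} f = integral {a..x} f"
    using Henstock_Kurzweil_Integration.integral_combine[OF assms(2,3) has_integral_integrable[OF fx]] .
  then have "integral {t..x} f = F x - F t"
    using integral_unique[OF fx] integral_unique[OF ft] by (simp add: algebra_simps)
  moreover have "f integrable_on {t..x}"
    using integrable_subinterval_real[OF has_integral_integrable[OF fx], of t x] assms by auto
  ultimately show ?thesis by (metis has_integral_integrable_integral)
qed

lemma primitive_increment_bound:
  fixes f y :: "real \<Rightarrow> real"
  assumes "\<And>t. t \<in> {a..b} \<Longrightarrow> (f has_integral (y t - y a)) {a..t}"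
    and "\<And>s. s \<in> {a..b} \<Longrightarrow> \<bar>f s\<bar> \<le> B"
    and "a \<le> t" "t \<le> x" "x \<le> b"
  shows "\<bar>y x - y t\<bar> \<le> B * (x - t)"
proof -
  have "(f has_integral (y x - y t)) {t..x}"
    by (rule has_integral_subinterval_of_primitive[where b=b]) (use assms in auto)
  moreover have "0 \<le> B" using assms(2)[of a] assms(3-5) by auto
  ultimately have "norm (y x - y t) \<le> B * Henstock_Kurzweil_Integration.content (cbox t x)"
    by (intro has_integral_bound[of B f]) (use assms in auto)
  then show ?thesis using assms by simp
qed

lemma eq_if_increment_quadratic:
  fixes E :: "real \<Rightarrow> real"
  assumes ab: "a \<le> b"
    and quad: "\<And>t x. a \<le> t \<Longrightarrow> t \<le> x \<Longrightarrow> x \<le> b \<Longrightarrow> \<bar>E x - E t\<bar> \<le> C * (x - t)\<^sup>2"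
  shows "E b = E a"
proof -
  have sym: "\<bar>E z - E t\<bar> \<le> C * \<bar>z - t\<bar> * \<bar>z - t\<bar>" if "z \<in> {a..b}" "t \<in> {a..b}" for z t
  proof (cases "t \<le> z")
    case True
    then show ?thesis using quad[of t z] that by (simp add: power2_eq_square mult.assoc)
  next
    case False
    then show ?thesis using quad[of z t] that
      by (simp add: power2_eq_square mult.assoc abs_minus_commute)
  qed
  have "(E has_real_derivative 0) (at t within {a..b})" if t: "t \<in> {a..b}" for t
    unfolding has_field_derivative_iff
  proof (rule Lim_null_comparison)
    show "\<forall>\<^sub>F z in at t within {a..b}. norm ((E z - E t) / (z - t)) \<le> C * \<bar>z - t\<bar>"
      unfolding eventually_at_filter
    proof (intro always_eventually allI impI)
      fix z assume z: "z \<noteq> t" "z \<in> {a..b}"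
      then have "\<bar>E z - E t\<bar> / \<bar>z - t\<bar> \<le> C * \<bar>z - t\<bar>"
        using sym[OF z(2) t] by (simp add: divide_le_eq)
      then show "norm ((E z - E t) / (z - t)) \<le> C * \<bar>z - t\<bar>" by simp
    qed
    have "((\<lambda>z. C * \<bar>z - t\<bar>) \<longlongrightarrow> C * \<bar>t - t\<bar>) (at t within {a..b})"
      by (intro tendsto_intros)
    then show "((\<lambda>z. C * \<bar>z - t\<bar>) \<longlongrightarrow> 0) (at t within {a..b})" by simp
  qed
  then obtain k where "\<forall>x\<in>{a..b}. E x = k"
    using has_field_derivative_zero_constant[of "{a..b}" E] by auto
  then show ?thesis using ab by auto
qed

lemma integrable_product_primitive:
  fixes y f c c' :: "real \<Rightarrow> real"
  assumes ab: "a \<le> b"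
    and yint: "\<And>t. t \<in> {a..b} \<Longrightarrow> (f has_integral (y t - y a)) {a..t}"
    and fb: "\<And>s. s \<in> {a..b} \<Longrightarrow> \<bar>f s\<bar> \<le> B"
    and cd: "\<And>s. s \<in> {a..b} \<Longrightarrow> (c has_real_derivative c' s) (at s)"
    and cc: "continuous_on {a..b} c'"
  shows "(\<lambda>s. c' s * y s + c s * f s) integrable_on {a..b}"
proof -
  have fi: "f integrable_on {a..b}" using yint[of b] ab by auto
  have "y t = y a + integral {a..t} f" if "t \<in> {a..b}" for t
    using yint[OF that] by (metis add_diff_cancel_left' diff_add_cancel integral_unique)
  then have ycont: "continuous_on {a..b} y"
    using continuous_on_eq[OF continuous_on_add[OF continuous_on_const indefinite_integral_continuous_1[OF fi]]]
    by (metis (no_types, lifting))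
  have ccont: "continuous_on {a..b} c"
    using cd by (meson DERIV_isCont continuous_at_imp_continuous_on)
  have fabs: "f absolutely_integrable_on {a..b}"
    by (rule absolutely_integrable_integrable_bound[where g="\<lambda>_. B"]) (use fb fi in auto)
  have "(\<lambda>s. c s * f s) absolutely_integrable_on {a..b}"
    by (rule absolutely_integrable_bounded_measurable_product_real)
      (auto intro!: continuous_imp_measurable_on_sets_lebesgue ccont fabs compact_imp_bounded
        compact_continuous_image)
  then have "(\<lambda>s. c s * f s) integrable_on {a..b}"
    using set_lebesgue_integral_eq_integral(1) by blast
  moreover have "(\<lambda>s. c' s * y s) integrable_on {a..b}"
    by (intro integrable_continuous_real continuous_on_mult cc ycont)
  ultimately show ?thesis by (rule integrable_add[rotated])
qed

text \<open>
  The correction \<open>c y - \<integral> (c' y + c f)\<close> has increments of order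
  \<open>(x - t)\<^sup>2\<close>, hence is constant.
\<close>
lemma has_integral_product_primitive:
  fixes y f c c' :: "real \<Rightarrow> real"
  assumes ab: "a \<le> b"
    and yint: "\<And>t. t \<in> {a..b} \<Longrightarrow> (f has_integral (y t - y a)) {a..t}"
    and fb: "\<And>s. s \<in> {a..b} \<Longrightarrow> \<bar>f s\<bar> \<le> B"
    and cd: "\<And>s. s \<in> {a..b} \<Longrightarrow> (c has_real_derivative c' s) (at s)"
    and cc: "continuous_on {a..b} c'"
  shows "((\<lambda>s. c' s * y s + c s * f s) has_integral (c b * y b - c a * y a)) {a..b}"
proof -
  define g where "g = (\<lambda>s. c' s * y s + c s * f s)"
  define E where "E = (\<lambda>s. c s * y s - integral {a..s} g)"
  have gi: "g integrable_on {a..b}"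
    unfolding g_def by (rule integrable_product_primitive[OF assms])
  obtain L where L: "\<And>s. s \<in> {a..b} \<Longrightarrow> \<bar>c' s\<bar> \<le> L"
    using compact_continuous_image[OF cc compact_Icc] compact_imp_bounded bounded_real
    by (metis image_eqI)
  have B0: "0 \<le> B" and L0: "0 \<le> L" using fb[of a] L[of a] ab by auto
  have cprim: "(c' has_integral (c t - c a)) {a..t}" if "t \<in> {a..b}" for t
  proof (rule fundamental_theorem_of_calculus)
    fix s assume "s \<in> {a..t}"
    then have "(c has_real_derivative c' s) (at s)" using cd that by auto
    then show "(c has_vector_derivative c' s) (at s within {a..t})"
      by (simp add: has_field_derivative_at_within has_real_derivative_iff_has_vector_derivative[symmetric])
  qed (use that in auto)
  have gprim: "(g has_integral (integral {a..s} g - integral {a..a} g)) {a..s}" if "s \<in> {a..b}" for s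
    using integrable_subinterval_real[OF gi, of a s] that by (simp add: integrable_integral)
  have "\<bar>E x - E t\<bar> \<le> 2 * L * B * (x - t)\<^sup>2" if tx: "a \<le> t" "t \<le> x" "x \<le> b" for t x
  proof -
    define h where "h = (\<lambda>s. (c x - c s) * f s + c' s * (y t - y s))"
    have "(f has_integral (y x - y t)) {t..x}" "(c' has_integral (c x - c t)) {t..x}"
      "(g has_integral (integral {a..x} g - integral {a..t} g)) {t..x}"
      by (rule has_integral_subinterval_of_primitive[where b=b]; use yint cprim gprim tx in simp)+
    then have "((\<lambda>s. c x * f s + y t * c' s - g s) has_integral
           (c x * (y x - y t) + y t * (c x - c t) - (integral {a..x} g - integral {a..t} g))) {t..x}"
      by (intro has_integral_diff has_integral_add has_integral_mult_right)
    then have "(h has_integral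
           (c x * (y x - y t) + y t * (c x - c t) - (integral {a..x} g - integral {a..t} g))) {t..x}"
      by (rule has_integral_eq[rotated]) (auto simp: h_def g_def algebra_simps)
    moreover have "c x * (y x - y t) + y t * (c x - c t) - (integral {a..x} g - integral {a..t} g)
        = E x - E t"
      by (simp add: E_def algebra_simps)
    ultimately have hi: "(h has_integral (E x - E t)) {t..x}" by simp
    have "\<bar>h s\<bar> \<le> 2 * L * B * (x - t)" if s: "s \<in> {t..x}" for s
    proof -
      have "\<bar>c x - c s\<bar> \<le> L * (x - t)"
        using primitive_increment_bound[OF cprim L, where b=b and t=s and x=x] s tx mult_left_mono[OF _ L0, of "x - s" "x - t"]
        by auto
      moreover have "\<bar>y t - y s\<bar> \<le> B * (x - t)"
        using primitive_increment_bound[OF yint fb, where b=b and t=t and x=s] s tx mult_left_mono[OF _ B0, of "s - t" "x - t"]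
        by (auto simp: abs_minus_commute)
      moreover have "\<bar>f s\<bar> \<le> B" "\<bar>c' s\<bar> \<le> L" using fb L s tx by auto
      ultimately have "\<bar>c x - c s\<bar> * \<bar>f s\<bar> + \<bar>c' s\<bar> * \<bar>y t - y s\<bar> \<le> L * (x - t) * B + L * (B * (x - t))"
        by (intro add_mono mult_mono) (use L0 B0 tx in auto)
      moreover have "\<bar>h s\<bar> \<le> \<bar>c x - c s\<bar> * \<bar>f s\<bar> + \<bar>c' s\<bar> * \<bar>y t - y s\<bar>"
        unfolding h_def by (metis abs_mult abs_triangle_ineq)
      ultimately show ?thesis by (simp add: algebra_simps)
    qed
    then have "norm (E x - E t) \<le> 2 * L * B * (x - t) * Henstock_Kurzweil_Integration.content (cbox t x)"
      by (intro has_integral_bound[of _ h, OF _ hi[unfolded box_real(2)[symmetric]]])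
        (use L0 B0 tx in auto)
    then show ?thesis using tx by (simp add: power2_eq_square mult.assoc)
  qed
  then have "E b = E a" by (rule eq_if_increment_quadratic[OF ab])
  then have "integral {a..b} g = c b * y b - c a * y a" by (simp add: E_def)
  then show ?thesis using gi unfolding g_def by (metis has_integral_integrable_integral)
qed

lemma has_integral_cong_rhs:
  assumes "(f has_integral k) S" "\<And>x. x \<in> S \<Longrightarrow> f x = g x" "k = k'"
  shows "(g has_integral k') S"
  using has_integral_eq[of S f g k] assms by auto

lemma has_integral_zero_nonneg_AE:
  fixes g :: "real \<Rightarrow> real"
  assumes int: "(g has_integral 0) {a..b}" and nonneg: "\<And>x. x \<in> {a..b} \<Longrightarrow> g x \<ge> 0"
  shows "AE x in lebesgue. x \<in> {a..b} \<longrightarrow> g x = 0"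
proof -
  have af: "g absolutely_integrable_on {a..b}"
    by (rule nonnegative_absolutely_integrable_1[OF has_integral_integrable[OF int] nonneg])
  have "set_lebesgue_integral lebesgue {a..b} g = integral {a..b} g"
    by (intro set_lebesgue_integral_eq_integral(2) af)
  also have "\<dots> = 0" using int by (simp add: integral_unique)
  finally have "AE x in lebesgue. indicator {a..b} x *\<^sub>R g x = 0"
    unfolding set_lebesgue_integral_def
    by (subst (asm) integral_nonneg_eq_0_iff_AE)
      (use af nonneg in \<open>auto simp: set_integrable_def indicator_def\<close>)
  then show ?thesis by eventually_elim (auto simp: indicator_def)
qed

lemma has_integral_AE_cong:
  fixes f g :: "real \<Rightarrow> real"
  assumes "(f has_integral i) {a..b}" "AE x in lebesgue. x \<in> {a..b} \<longrightarrow> f x = g x"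
  shows "(g has_integral i) {a..b}"
proof -
  obtain N where N: "{x \<in> space lebesgue. \<not> (x \<in> {a..b} \<longrightarrow> f x = g x)} \<subseteq> N"
    "emeasure lebesgue N = 0" "N \<in> sets lebesgue"
    using AE_E[OF assms(2)] by blast
  then have "negligible N" by (simp add: negligible_iff_null_sets null_sets_def)
  then show ?thesis by (rule has_integral_spike[OF _ _ assms(1)]) (use N in auto)
qed

lemma AE_lebesgue_neq: "AE x in lebesgue. (x::real) \<noteq> c"
  by (rule AE_I'[of "{c}"]) (auto simp: negligible_iff_null_sets[symmetric])

lemma continuous_pos_induct:
  fixes g :: "real \<Rightarrow> real"
  assumes cont: "continuous_on {0..T} g" and g0: "g 0 > 0"
    and step: "\<And>t. t \<in> {0..T} \<Longrightarrow> (\<forall>s\<in>{0..t}. g s \<ge> 0) \<Longrightarrow> g t > 0"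
    and t: "t \<in> {0..T}"
  shows "g t > 0"
proof (rule ccontr)
  assume "\<not> g t > 0"
  define Z where "Z = {0..T} \<inter> g -` {..0}"
  have "closed Z" unfolding Z_def by (intro continuous_closed_preimage cont) auto
  moreover have "t \<in> Z" "bdd_below Z"
    using t \<open>\<not> g t > 0\<close> unfolding Z_def by (auto intro: bdd_belowI[where m=0])
  ultimately have aZ: "Inf Z \<in> Z" and low: "\<And>s. s \<in> Z \<Longrightarrow> Inf Z \<le> s"
    using closed_contains_Inf cInf_lower by blast+
  have "\<forall>s\<in>{0..Inf Z}. g s \<ge> 0"
  proof
    fix s assume s: "s \<in> {0..Inf Z}"
    show "g s \<ge> 0"
    proof (cases "s < Inf Z")
      case True
      then show ?thesis using low[of s] s aZ unfolding Z_def by force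
    next
      case False
      then have "s = Inf Z" using s by simp
      obtain x where x: "0 \<le> x" "x \<le> Inf Z" "g x = 0"
        using IVT2'[of g "Inf Z" 0 0] aZ g0 continuous_on_subset[OF cont, of "{0..Inf Z}"]
        unfolding Z_def by auto
      then have "x = Inf Z" using low[of x] aZ unfolding Z_def by force
      then show ?thesis using x \<open>s = Inf Z\<close> by simp
    qed
  qed
  then have "g (Inf Z) > 0" using step[of "Inf Z"] aZ unfolding Z_def by auto
  then show False using aZ unfolding Z_def by auto
qed

lemma admissibleD:
  assumes "admissible T \<beta>" "s \<in> {0..T}"
  shows "0 \<le> fst (\<beta> s)" "fst (\<beta> s) \<le> 1" "0 \<le> snd (\<beta> s)" "snd (\<beta> s) \<le> 1"
  using assms unfolding admissible_def by auto

lemma trajectory_has_integral: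
  assumes "trajectory T \<beta> x0 \<eta>" "0 \<le> u" "u \<le> t" "t \<le> T"
  shows "((\<lambda>s. dyn (\<beta> s) (\<eta> s)) has_integral (\<eta> t - \<eta> u)) {u..t}"
proof (rule has_integral_subinterval_of_primitive[where b=T])
  show "((\<lambda>s. dyn (\<beta> s) (\<eta> s)) has_integral (\<eta> s - \<eta> 0)) {0..s}" if "s \<in> {0..T}" for s
    using assms(1) that unfolding trajectory_def by auto
qed (use assms in auto)

lemma trajectory_continuous_on:
  assumes "trajectory T \<beta> x0 \<eta>" "0 \<le> T"
  shows "continuous_on {0..T} \<eta>"
proof -
  have "(\<lambda>s. dyn (\<beta> s) (\<eta> s)) integrable_on {0..T}"
    using trajectory_has_integral[OF assms(1) order.refl assms(2) order.refl] by blast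
  then have "continuous_on {0..T} (\<lambda>t. \<eta> 0 + integral {0..t} (\<lambda>s. dyn (\<beta> s) (\<eta> s)))"
    by (intro continuous_on_add continuous_on_const indefinite_integral_continuous_1)
  moreover have "\<eta> t = \<eta> 0 + integral {0..t} (\<lambda>s. dyn (\<beta> s) (\<eta> s))" if "t \<in> {0..T}" for t
    using integral_unique[OF trajectory_has_integral[OF assms(1), of 0 t]] that by auto
  ultimately show ?thesis by (metis (no_types, lifting) continuous_on_eq)
qed

lemma trajectory_dyn_bounded:
  assumes adm: "admissible T \<beta>" and tr: "trajectory T \<beta> x0 \<eta>" and T: "0 \<le> T"
  obtains B where "\<And>s. s \<in> {0..T} \<Longrightarrow> \<bar>fst (dyn (\<beta> s) (\<eta> s))\<bar> \<le> B \<and> \<bar>snd (dyn (\<beta> s) (\<eta> s))\<bar> \<le> B"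
proof -
  have "bounded (\<eta> ` {0..T})"
    by (intro compact_imp_bounded compact_continuous_image trajectory_continuous_on[OF tr T] compact_Icc)
  then obtain K where K: "\<And>s. s \<in> {0..T} \<Longrightarrow> norm (\<eta> s) \<le> K" unfolding bounded_iff by blast
  have "\<bar>fst (dyn (\<beta> s) (\<eta> s))\<bar> \<le> 2 * K \<and> \<bar>snd (dyn (\<beta> s) (\<eta> s))\<bar> \<le> 2 * K" if s: "s \<in> {0..T}" for s
  proof -
    have x: "\<bar>fst (\<eta> s)\<bar> \<le> K" "\<bar>snd (\<eta> s)\<bar> \<le> K"
      using K[OF s] norm_fst_le[of "fst (\<eta> s)" "snd (\<eta> s)"] norm_snd_le[of "snd (\<eta> s)" "fst (\<eta> s)"]
      by auto
    then have "\<bar>mean (\<eta> s)\<bar> \<le> K" unfolding mean_def by auto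
    then have "\<bar>(1 - a) * mean (\<eta> s)\<bar> \<le> K" if "0 \<le> a" "a \<le> 1" for a
      using that unfolding abs_mult by (smt (verit) abs_ge_zero mult_left_le_one_le)
    then show ?thesis using x admissibleD[OF adm s] unfolding dyn_def by fastforce
  qed
  then show ?thesis using that by blast
qed

lemma trajectory_product_has_integral:
  assumes adm: "admissible T \<beta>" and tr: "trajectory T \<beta> x0 \<eta>"
    and ut: "0 \<le> u" "u \<le> t" "t \<le> T"
    and cd: "\<And>s. s \<in> {u..t} \<Longrightarrow> (c has_real_derivative c' s) (at s)"
    and cc: "continuous_on {u..t} c'"
  shows "((\<lambda>s. c' s * (p * fst (\<eta> s) + q * snd (\<eta> s))
              + c s * (p * fst (dyn (\<beta> s) (\<eta> s)) + q * snd (dyn (\<beta> s) (\<eta> s))))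
     has_integral (c t * (p * fst (\<eta> t) + q * snd (\<eta> t)) - c u * (p * fst (\<eta> u) + q * snd (\<eta> u))))
     {u..t}"
proof -
  let ?L = "\<lambda>x :: real \<times> real. p * fst x + q * snd x"
  obtain B where B: "\<And>s. s \<in> {0..T} \<Longrightarrow> \<bar>fst (dyn (\<beta> s) (\<eta> s))\<bar> \<le> B \<and> \<bar>snd (dyn (\<beta> s) (\<eta> s))\<bar> \<le> B"
    using trajectory_dyn_bounded[OF adm tr] ut by force
  show ?thesis
  proof (rule has_integral_product_primitive[OF ut(2) _ _ cd cc])
    have L: "bounded_linear ?L" by (intro bounded_linear_intros)
    show "((\<lambda>s. ?L (dyn (\<beta> s) (\<eta> s))) has_integral (?L (\<eta> x) - ?L (\<eta> u))) {u..x}"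
      if "x \<in> {u..t}" for x
      using has_integral_linear[OF trajectory_has_integral[OF tr, of u x] L] that ut
      by (simp add: o_def algebra_simps)
    show "\<bar>?L (dyn (\<beta> s) (\<eta> s))\<bar> \<le> \<bar>p\<bar> * B + \<bar>q\<bar> * B" if "s \<in> {u..t}" for s
    proof -
      have "\<bar>?L (dyn (\<beta> s) (\<eta> s))\<bar> \<le> \<bar>p\<bar> * \<bar>fst (dyn (\<beta> s) (\<eta> s))\<bar> + \<bar>q\<bar> * \<bar>snd (dyn (\<beta> s) (\<eta> s))\<bar>"
        by (metis abs_mult abs_triangle_ineq)
      also have "\<dots> \<le> \<bar>p\<bar> * B + \<bar>q\<bar> * B"
        using B[of s] that ut by (intro add_mono mult_left_mono) auto
      finally show ?thesis .
    qed
  qed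
qed

lemma trajectory_exp_weighted_has_integral:
  assumes "admissible T \<beta>" "trajectory T \<beta> x0 \<eta>" "0 \<le> u" "u \<le> t" "t \<le> T"
  shows "((\<lambda>s. exp s * ((p * (1 - fst (\<beta> s)) + q * (1 - snd (\<beta> s))) * mean (\<eta> s)))
     has_integral (exp t * (p * fst (\<eta> t) + q * snd (\<eta> t)) - exp u * (p * fst (\<eta> u) + q * snd (\<eta> u))))
     {u..t}"
  by (rule has_integral_cong_rhs[OF trajectory_product_has_integral[OF assms, of exp exp p q]])
    (auto intro!: DERIV_exp continuous_intros simp: dyn_def mean_def field_simps)

lemma trajectory_mean_has_integral:
  assumes "admissible T \<beta>" "trajectory T \<beta> x0 \<eta>" "0 \<le> u" "u \<le> t" "t \<le> T"
  shows "((\<lambda>s. - ((fst (\<beta> s) + snd (\<beta> s)) / 2 * mean (\<eta> s))) has_integral (mean (\<eta> t) - mean (\<eta> u))) {u..t}"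
  by (rule has_integral_cong_rhs[OF trajectory_product_has_integral[OF assms, of "\<lambda>_. 1" "\<lambda>_. 0" "1/2" "1/2"]])
    (auto simp: dyn_def mean_def field_simps)

text \<open>Pairing of the state with a costate \<open>(c(t), exp t)\<close> in the coordinates (mean, difference).\<close>
lemma trajectory_mean_diff_has_integral:
  assumes adm: "admissible T \<beta>" and tr: "trajectory T \<beta> x0 \<eta>"
    and ut: "0 \<le> u" "u \<le> t" "t \<le> T"
    and cd: "\<And>s. s \<in> {u..t} \<Longrightarrow> (c has_real_derivative c' s) (at s)"
    and cc: "continuous_on {u..t} c'"
  shows "((\<lambda>s. mean (\<eta> s) * (c' s - c s * (fst (\<beta> s) + snd (\<beta> s)) / 2 + exp s * (snd (\<beta> s) - fst (\<beta> s))))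
    has_integral (c t * mean (\<eta> t) + exp t * (fst (\<eta> t) - snd (\<eta> t))
                  - c u * mean (\<eta> u) - exp u * (fst (\<eta> u) - snd (\<eta> u)))) {u..t}"
proof -
  have "((\<lambda>s. c' s * (1/2 * fst (\<eta> s) + 1/2 * snd (\<eta> s))
          + c s * (1/2 * fst (dyn (\<beta> s) (\<eta> s)) + 1/2 * snd (dyn (\<beta> s) (\<eta> s))))
     has_integral (c t * (1/2 * fst (\<eta> t) + 1/2 * snd (\<eta> t)) - c u * (1/2 * fst (\<eta> u) + 1/2 * snd (\<eta> u))))
     {u..t}"
    by (rule trajectory_product_has_integral[OF adm tr ut cd cc])
  moreover have "((\<lambda>s. exp s * (1 * fst (\<eta> s) + (-1) * snd (\<eta> s))
          + exp s * (1 * fst (dyn (\<beta> s) (\<eta> s)) + (-1) * snd (dyn (\<beta> s) (\<eta> s))))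
     has_integral (exp t * (1 * fst (\<eta> t) + (-1) * snd (\<eta> t)) - exp u * (1 * fst (\<eta> u) + (-1) * snd (\<eta> u))))
     {u..t}"
    by (rule trajectory_product_has_integral[OF adm tr ut]) (auto intro!: DERIV_exp continuous_intros)
  ultimately show ?thesis
    by (rule has_integral_cong_rhs[OF has_integral_add]) (simp_all add: dyn_def mean_def field_simps)
qed

section \<open>Monotone quantities along trajectories\<close>

lemma trajectory_mean_pos:
  assumes adm: "admissible T \<beta>" and tr: "trajectory T \<beta> x0 \<eta>" and m0: "0 < mean x0"
    and t: "t \<in> {0..T}"
  shows "0 < mean (\<eta> t)"
proof (rule continuous_pos_induct[where g="\<lambda>s. mean (\<eta> s)", OF _ _ _ t])
  have "\<eta> 0 = x0" using tr unfolding trajectory_def by simp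
  then show pos0: "0 < mean (\<eta> 0)" using m0 by simp
  show "continuous_on {0..T} (\<lambda>s. mean (\<eta> s))"
    unfolding mean_def using t by (intro continuous_intros trajectory_continuous_on[OF tr]) auto
  fix t assume t: "t \<in> {0..T}" and nonneg: "\<forall>s\<in>{0..t}. 0 \<le> mean (\<eta> s)"
  have "0 \<le> exp t * (1/2 * fst (\<eta> t) + 1/2 * snd (\<eta> t)) - exp 0 * (1/2 * fst (\<eta> 0) + 1/2 * snd (\<eta> 0))"
  proof (rule has_integral_nonneg[OF trajectory_exp_weighted_has_integral[OF adm tr, of 0 t]])
    fix s assume s: "s \<in> {0..t}"
    then have "s \<in> {0..T}" using t by auto
    then show "0 \<le> exp s * ((1/2 * (1 - fst (\<beta> s)) + 1/2 * (1 - snd (\<beta> s))) * mean (\<eta> s))"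
      using admissibleD[OF adm] nonneg s by (intro mult_nonneg_nonneg add_nonneg_nonneg) auto
  qed (use t in auto)
  then have "mean (\<eta> 0) \<le> exp t * mean (\<eta> t)" by (simp add: mean_def field_simps)
  then have "0 < exp t * mean (\<eta> t)" using pos0 by linarith
  then show "0 < mean (\<eta> t)" by (simp add: zero_less_mult_iff)
qed

lemma exp_weighted_rate_nonneg:
  assumes "admissible T \<beta>" "trajectory T \<beta> x0 \<eta>" "0 < mean x0" "0 \<le> p" "0 \<le> q" "s \<in> {0..T}"
  shows "0 \<le> exp s * ((p * (1 - fst (\<beta> s)) + q * (1 - snd (\<beta> s))) * mean (\<eta> s))"
  using admissibleD[OF assms(1,6)] trajectory_mean_pos[OF assms(1-3,6)] assms(4,5)
  by (intro mult_nonneg_nonneg add_nonneg_nonneg) auto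

lemma trajectory_exp_weighted_mono:
  assumes adm: "admissible T \<beta>" and tr: "trajectory T \<beta> x0 \<eta>" and m0: "0 < mean x0"
    and pq: "0 \<le> p" "0 \<le> q" and ut: "0 \<le> u" "u \<le> t" "t \<le> T"
  shows "exp u * (p * fst (\<eta> u) + q * snd (\<eta> u)) \<le> exp t * (p * fst (\<eta> t) + q * snd (\<eta> t))"
proof -
  have "0 \<le> exp t * (p * fst (\<eta> t) + q * snd (\<eta> t)) - exp u * (p * fst (\<eta> u) + q * snd (\<eta> u))"
    by (rule has_integral_nonneg[OF trajectory_exp_weighted_has_integral[OF adm tr ut]])
      (use exp_weighted_rate_nonneg[OF adm tr m0 pq] ut in auto)
  then show ?thesis by simp
qed

lemma trajectory_mean_antimono:
  assumes adm: "admissible T \<beta>" and tr: "trajectory T \<beta> x0 \<eta>" and m0: "0 < mean x0"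
    and ut: "0 \<le> u" "u \<le> t" "t \<le> T"
  shows "mean (\<eta> t) \<le> mean (\<eta> u)"
proof -
  have "0 \<le> - (mean (\<eta> t) - mean (\<eta> u))"
  proof (rule has_integral_nonneg[OF has_integral_neg[OF trajectory_mean_has_integral[OF adm tr ut]]])
    fix s assume "s \<in> {u..t}"
    then have s: "s \<in> {0..T}" using ut by auto
    show "0 \<le> - (- ((fst (\<beta> s) + snd (\<beta> s)) / 2 * mean (\<eta> s)))"
      using admissibleD[OF adm s] trajectory_mean_pos[OF adm tr m0 s] by simp
  qed
  then show ?thesis by simp
qed

lemma AE_exp_weighted_rate_zero:
  assumes adm: "admissible T \<beta>" and tr: "trajectory T \<beta> x0 \<eta>" and m0: "0 < mean x0"
    and pq: "0 \<le> p" "0 \<le> q" and T: "0 \<le> T"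
    and eq: "exp T * (p * fst (\<eta> T) + q * snd (\<eta> T)) = p * fst x0 + q * snd x0"
  shows "AE t in lebesgue. t \<in> {0..T} \<longrightarrow> p * (1 - fst (\<beta> t)) + q * (1 - snd (\<beta> t)) = 0"
proof -
  have "\<eta> 0 = x0" using tr unfolding trajectory_def by simp
  then have "((\<lambda>s. exp s * ((p * (1 - fst (\<beta> s)) + q * (1 - snd (\<beta> s))) * mean (\<eta> s))) has_integral 0) {0..T}"
    using trajectory_exp_weighted_has_integral[OF adm tr order.refl T order.refl, of p q] eq by simp
  then have "AE t in lebesgue. t \<in> {0..T} \<longrightarrow>
      exp t * ((p * (1 - fst (\<beta> t)) + q * (1 - snd (\<beta> t))) * mean (\<eta> t)) = 0"
    by (rule has_integral_zero_nonneg_AE) (rule exp_weighted_rate_nonneg[OF adm tr m0 pq])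
  then show ?thesis
    by eventually_elim (use trajectory_mean_pos[OF adm tr m0] in \<open>auto simp: less_imp_neq[symmetric]\<close>)
qed

lemma trajectory_terminal_ge:
  assumes "admissible T \<beta>" "trajectory T \<beta> x0 \<eta>" "0 < mean x0" "0 \<le> T"
  shows "fst x0 * exp (- T) \<le> fst (\<eta> T)" "snd x0 * exp (- T) \<le> snd (\<eta> T)"
proof -
  have "\<eta> 0 = x0" using assms(2) unfolding trajectory_def by simp
  then have "fst x0 \<le> exp T * fst (\<eta> T)" "snd x0 \<le> exp T * snd (\<eta> T)"
    using trajectory_exp_weighted_mono[OF assms(1-3), of 1 0 0 T]
      trajectory_exp_weighted_mono[OF assms(1-3), of 0 1 0 T] assms(4) by auto
  then show "fst x0 * exp (- T) \<le> fst (\<eta> T)" "snd x0 * exp (- T) \<le> snd (\<eta> T)"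
    by (simp_all add: exp_minus field_simps)
qed

lemma admissible_switching:
  assumes "0 \<le> fst A" "fst A \<le> 1" "0 \<le> snd A" "snd A \<le> 1"
    "0 \<le> fst B" "fst B \<le> 1" "0 \<le> snd B" "snd B \<le> 1"
  shows "admissible T (\<lambda>t. if t < \<tau> then A else B)"
  unfolding admissible_def
proof (intro conjI)
  show "(\<lambda>t. if t < \<tau> then A else B) \<in> borel_measurable (restrict_space lebesgue {0..T})"
    by measurable (auto intro!: continuous_imp_measurable_on_sets_lebesgue continuous_intros)
qed (use assms in auto)

lemma trajectory_if_has_vector_derivative:
  assumes "\<eta> 0 = x0" "continuous_on {0..T} \<eta>" "finite S"
    and "\<And>s. s \<in> {0<..<T} - S \<Longrightarrow> (\<eta> has_vector_derivative dyn (\<beta> s) (\<eta> s)) (at s)"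
  shows "trajectory T \<beta> x0 \<eta>"
  unfolding trajectory_def
proof (intro conjI ballI)
  fix t assume t: "t \<in> {0..T}"
  have "((\<lambda>s. dyn (\<beta> s) (\<eta> s)) has_integral (\<eta> t - \<eta> 0)) {0..t}"
    by (rule fundamental_theorem_of_calculus_interior_strong[OF assms(3)])
      (use t assms(4) in \<open>auto intro: continuous_on_subset[OF assms(2)]\<close>)
  then show "((\<lambda>s. dyn (\<beta> s) (\<eta> s)) has_integral (\<eta> t - x0)) {0..t}" using assms(1) by simp
qed (rule assms(1))

lemma trajectory_switching:
  assumes P: "\<And>s. (P has_vector_derivative dyn A (P s)) (at s)"
    and Q: "\<And>s. (Q has_vector_derivative dyn B (Q s)) (at s)"
    and PQ: "P \<tau> = Q \<tau>" and x0: "(if 0 < \<tau> then P 0 else Q 0) = x0"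
  shows "trajectory T (\<lambda>t. if t < \<tau> then A else B) x0 (\<lambda>t. if t < \<tau> then P t else Q t)"
proof (rule trajectory_if_has_vector_derivative[where S="{\<tau>}"])
  have cont: "continuous_on X R" if "\<And>s. (R has_vector_derivative R' s) (at s)" for R R' and X :: "real set"
    using that by (intro continuous_at_imp_continuous_on ballI has_vector_derivative_continuous) auto
  have "(\<lambda>t. if t < \<tau> then P t else Q t) = (\<lambda>t. if t \<le> \<tau> then P t else Q t)"
    using PQ by (auto intro!: ext)
  then show "continuous_on {0..T} (\<lambda>t. if t < \<tau> then P t else Q t)"
    by (simp only:) (rule continuous_on_cases_le[where h="\<lambda>t. t"];
        auto intro: cont[OF P] cont[OF Q] PQ continuous_on_id)
  fix s assume s: "s \<in> {0<..<T} - {\<tau>}"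
  show "((\<lambda>t. if t < \<tau> then P t else Q t) has_vector_derivative
          dyn (if s < \<tau> then A else B) (if s < \<tau> then P s else Q s)) (at s)"
  proof (cases "s < \<tau>")
    case True
    have "((\<lambda>t. if t < \<tau> then P t else Q t) has_vector_derivative dyn A (P s)) (at s)"
      by (rule has_vector_derivative_transform_within_open[OF P[of s], where S="{..<\<tau>}"]) (use True in auto)
    then show ?thesis using True by simp
  next
    case False
    then have "\<tau> < s" using s by auto
    have "((\<lambda>t. if t < \<tau> then P t else Q t) has_vector_derivative dyn B (Q s)) (at s)"
      by (rule has_vector_derivative_transform_within_open[OF Q[of s], where S="{\<tau><..}"])
        (use \<open>\<tau> < s\<close> in auto)
    then show ?thesis using False by simp
  qed
qed (use x0 in auto)

lemma has_vector_derivative_pair_real: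
  "(f has_real_derivative a) (at s) \<Longrightarrow> (g has_real_derivative b) (at s) \<Longrightarrow>
   ((\<lambda>t. (f t, g t)) has_vector_derivative (a, b)) (at s)"
  by (simp add: has_real_derivative_iff_has_vector_derivative has_vector_derivative_Pair)

lemma admissible_const:
  assumes "0 \<le> fst A" "fst A \<le> 1" "0 \<le> snd A" "snd A \<le> 1"
  shows "admissible T (\<lambda>_. A)"
  using admissible_switching[OF assms assms, of T 0] by simp

lemma trajectory_full_control:
  "trajectory T (\<lambda>_. (1, 1)) x0 (\<lambda>t. (fst x0 * exp (- t), snd x0 * exp (- t)))"
proof (rule trajectory_if_has_vector_derivative[where S="{}"])
  show "continuous_on {0..T} (\<lambda>t. (fst x0 * exp (- t), snd x0 * exp (- t)))"
    by (intro continuous_intros)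
  show "((\<lambda>t. (fst x0 * exp (- t), snd x0 * exp (- t))) has_vector_derivative
      dyn (1, 1) (fst x0 * exp (- s), snd x0 * exp (- s))) (at s)" for s
    by (auto simp: dyn_def intro!: has_vector_derivative_pair_real derivative_eq_intros)
qed auto

section \<open>Long horizon: the switching control\<close>

definition switch_time :: "real \<times> real \<Rightarrow> real" where
  "switch_time x0 = 2 * ln (fst x0 / (2 * mean x0))"

lemma less_switch_time_iff:
  assumes "0 < mean x0" "0 < fst x0"
  shows "T < switch_time x0 \<longleftrightarrow> 2 * mean x0 * exp (T / 2) < fst x0"
proof -
  have "T < switch_time x0 \<longleftrightarrow> exp (T / 2) < exp (ln (fst x0 / (2 * mean x0)))"
    unfolding switch_time_def exp_less_cancel_iff by linarith
  also have "\<dots> \<longleftrightarrow> 2 * mean x0 * exp (T / 2) < fst x0"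
    using assms by (simp add: field_simps)
  finally show ?thesis .
qed

lemma cost_ge_decay_fst:
  assumes "admissible T \<beta>" "trajectory T \<beta> x0 \<eta>" "0 < mean x0" "0 \<le> fst x0" "0 \<le> T"
  shows "(fst x0 * exp (- T))^2 / 2 \<le> cost T \<eta>"
proof -
  have "(fst x0 * exp (- T))^2 \<le> fst (\<eta> T)^2"
    using trajectory_terminal_ge(1)[OF assms(1-3,5)] assms(4) by (intro power_mono) auto
  then show ?thesis unfolding cost_def by (simp add: add_increasing2 divide_right_mono)
qed

lemma trajectory_long_switching:
  assumes m0: "0 < mean x0" and x2: "snd x0 \<le> 0"
  defines "t0 \<equiv> switch_time x0"
  shows "trajectory T (\<lambda>t. if t < t0 then (1, 0) else (1, 1)) x0
    (\<lambda>t. if t < t0 then (fst x0 * exp (- t), 2 * mean x0 * exp (- t / 2) - fst x0 * exp (- t))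
          else (fst x0 * exp (- t), 0))"
proof (rule trajectory_switching)
  define x1 m where "x1 = fst x0" and "m = mean x0"
  have x1p: "0 < x1" and m2: "2 * m \<le> x1" and mp: "0 < m"
    using m0 x2 unfolding x1_def m_def mean_def by auto
  have t0: "t0 = 2 * ln (x1 / (2 * m))" unfolding t0_def switch_time_def x1_def m_def ..
  have emh: "exp (- t0 / 2) = 2 * m / x1"
    unfolding t0 using mp x1p m2 by (simp add: exp_minus exp_ln)
  moreover have "exp (- t0) = exp (- t0 / 2) ^ 2"
    by (simp add: power2_eq_square exp_add[symmetric])
  ultimately show "(x1 * exp (- t0), 2 * m * exp (- t0 / 2) - x1 * exp (- t0)) = (x1 * exp (- t0), 0)"
    using emh x1p by (simp add: power2_eq_square)
  show "(if 0 < t0 then (x1 * exp (- 0), 2 * m * exp (- 0 / 2) - x1 * exp (- 0)) else (x1 * exp (- 0), 0)) = x0"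
  proof (cases "0 < t0")
    case False
    then have "x1 = 2 * m" using m2 mp x1p unfolding t0 by simp
    then show ?thesis using False unfolding x1_def m_def mean_def by (auto simp: prod_eq_iff)
  qed (auto simp: x1_def m_def mean_def prod_eq_iff field_simps)
qed (auto simp: dyn_def mean_def field_simps intro!: has_vector_derivative_pair_real derivative_eq_intros)

lemma switching_control_optimal:
  assumes m0: "0 < mean x0" and x2: "snd x0 \<le> 0" and T: "0 \<le> T" and t0T: "switch_time x0 \<le> T"
  shows "\<exists>\<eta>. optimal T x0 (\<lambda>t. if t < switch_time x0 then (1, 0) else (1, 1)) \<eta>
             \<and> cost T \<eta> = (fst x0 * exp (- T))^2 / 2"
proof -
  let ?\<alpha> = "\<lambda>t. if t < switch_time x0 then (1::real, 0::real) else (1, 1)"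
  let ?\<eta> = "\<lambda>t. if t < switch_time x0
      then (fst x0 * exp (- t), 2 * mean x0 * exp (- t / 2) - fst x0 * exp (- t))
      else (fst x0 * exp (- t), 0)"
  have x1: "0 \<le> fst x0" using m0 x2 unfolding mean_def by simp
  have cost: "cost T ?\<eta> = (fst x0 * exp (- T))^2 / 2"
    using t0T by (simp add: cost_def)
  have "optimal T x0 ?\<alpha> ?\<eta>"
    unfolding optimal_def
  proof (intro conjI allI impI)
    show "admissible T ?\<alpha>" by (rule admissible_switching) auto
    show "trajectory T ?\<alpha> x0 ?\<eta>" by (rule trajectory_long_switching[OF m0 x2])
    fix \<beta> \<eta>' assume "admissible T \<beta>" "trajectory T \<beta> x0 \<eta>'"
    from cost_ge_decay_fst[OF this m0 x1 T] show "cost T ?\<eta> \<le> cost T \<eta>'" using cost by simp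
  qed
  then show ?thesis using cost by blast
qed

lemma sum_squares_le_imp_eq:
  fixes a b p q :: real
  assumes "p \<le> a" "0 \<le> p" "q \<le> b" "0 \<le> q" "a^2 + b^2 \<le> p^2 + q^2"
  shows "a = p" "b = q"
proof -
  have "p^2 \<le> a^2" "q^2 \<le> b^2" using assms by (intro power_mono; simp)+
  then have "a^2 = p^2" "b^2 = q^2" using assms(5) by linarith+
  then show "a = p" "b = q" using assms by (metis abs_of_nonneg order.trans power2_eq_iff_nonneg)+
qed

locale optimal_control =
  fixes T :: real and x0 :: "real \<times> real" and \<alpha> \<xi> :: "real \<Rightarrow> real \<times> real"
  assumes T_pos: "0 < T" and mean_x0_pos: "0 < mean x0" and optimal: "optimal T x0 \<alpha> \<xi>"
begin

lemma admissible: "admissible T \<alpha>"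
  and trajectory: "trajectory T \<alpha> x0 \<xi>"
  and cost_le: "admissible T \<beta> \<Longrightarrow> trajectory T \<beta> x0 \<eta> \<Longrightarrow> cost T \<xi> \<le> cost T \<eta>"
  using optimal unfolding optimal_def by auto

lemma initial: "\<xi> 0 = x0"
  using trajectory unfolding trajectory_def by simp

lemma mean_pos: "t \<in> {0..T} \<Longrightarrow> 0 < mean (\<xi> t)"
  by (rule trajectory_mean_pos[OF admissible trajectory mean_x0_pos])

lemma control_bounds: "s \<in> {0..T} \<Longrightarrow> 0 \<le> fst (\<alpha> s) \<and> fst (\<alpha> s) \<le> 1 \<and> 0 \<le> snd (\<alpha> s) \<and> snd (\<alpha> s) \<le> 1"
  using admissibleD[OF admissible] by blast

lemma AE_fst_control_one:
  assumes "exp T * fst (\<xi> T) = fst x0"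
  shows "AE t in lebesgue. t \<in> {0..T} \<longrightarrow> fst (\<alpha> t) = 1"
  using AE_exp_weighted_rate_zero[OF admissible trajectory mean_x0_pos, of 1 0] assms T_pos by simp

lemma AE_snd_control_one:
  assumes "exp T * snd (\<xi> T) = snd x0"
  shows "AE t in lebesgue. t \<in> {0..T} \<longrightarrow> snd (\<alpha> t) = 1"
  using AE_exp_weighted_rate_zero[OF admissible trajectory mean_x0_pos, of 0 1] assms T_pos by simp

lemma full_control_if_initial_pos:
  assumes "0 < fst x0" "0 < snd x0"
  shows "AE t in lebesgue. t \<in> {0..T} \<longrightarrow> \<alpha> t = (1, 1)"
proof -
  have "cost T \<xi> \<le> cost T (\<lambda>t. (fst x0 * exp (- t), snd x0 * exp (- t)))"
    by (rule cost_le[OF admissible_const trajectory_full_control]) auto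
  then have "fst (\<xi> T)^2 + snd (\<xi> T)^2 \<le> (fst x0 * exp (- T))^2 + (snd x0 * exp (- T))^2"
    by (simp add: cost_def)
  moreover have "fst x0 * exp (- T) \<le> fst (\<xi> T)" "snd x0 * exp (- T) \<le> snd (\<xi> T)"
    using trajectory_terminal_ge[OF admissible trajectory mean_x0_pos] T_pos by auto
  ultimately have "fst (\<xi> T) = fst x0 * exp (- T)" "snd (\<xi> T) = snd x0 * exp (- T)"
    using sum_squares_le_imp_eq[of "fst x0 * exp (- T)" "fst (\<xi> T)" "snd x0 * exp (- T)" "snd (\<xi> T)"] assms
    by auto
  then have "exp T * fst (\<xi> T) = fst x0" "exp T * snd (\<xi> T) = snd x0"
    by (simp_all add: exp_minus)
  from AE_fst_control_one[OF this(1)] AE_snd_control_one[OF this(2)] show ?thesis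
    by eventually_elim (auto simp: prod_eq_iff)
qed

lemma long_horizon_terminal:
  assumes "snd x0 \<le> 0" "switch_time x0 \<le> T"
  shows "snd (\<xi> T) = 0" "fst (\<xi> T) = fst x0 * exp (- T)"
proof -
  have x1: "0 \<le> fst x0" using assms(1) mean_x0_pos unfolding mean_def by simp
  obtain \<eta> where \<eta>: "optimal T x0 (\<lambda>t. if t < switch_time x0 then (1, 0) else (1, 1)) \<eta>"
    and cost\<eta>: "cost T \<eta> = (fst x0 * exp (- T))^2 / 2"
    using switching_control_optimal[OF mean_x0_pos assms(1) less_imp_le[OF T_pos] assms(2)] by blast
  have "cost T \<xi> \<le> cost T \<eta>"
    using \<eta> unfolding optimal_def by (blast intro: cost_le)
  then have "cost T \<xi> \<le> (fst x0 * exp (- T))^2 / 2" using cost\<eta> by simp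
  then have c: "fst (\<xi> T)^2 + snd (\<xi> T)^2 \<le> (fst x0 * exp (- T))^2 + 0^2" by (simp add: cost_def)
  have "fst x0 * exp (- T) \<le> fst (\<xi> T)"
    using trajectory_terminal_ge[OF admissible trajectory mean_x0_pos] T_pos by simp
  then have "fst (\<xi> T) = fst x0 * exp (- T) \<and> \<bar>snd (\<xi> T)\<bar> = 0"
    using sum_squares_le_imp_eq[of "fst x0 * exp (- T)" "fst (\<xi> T)" 0 "\<bar>snd (\<xi> T)\<bar>"] c x1 by simp
  then show "snd (\<xi> T) = 0" "fst (\<xi> T) = fst x0 * exp (- T)" by simp_all
qed

lemma snd_zero_persists:
  assumes "snd (\<xi> T) = 0" "tb \<in> {0..T}" "snd (\<xi> tb) = 0" "t \<in> {tb..T}"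
  shows "snd (\<xi> t) = 0"
proof -
  have "exp tb * snd (\<xi> tb) \<le> exp t * snd (\<xi> t)" "exp t * snd (\<xi> t) \<le> exp T * snd (\<xi> T)"
    using trajectory_exp_weighted_mono[OF admissible trajectory mean_x0_pos, of 0 1] assms(2,4) by auto
  then show ?thesis using assms(1,3) by (simp add: mult_le_0_iff zero_le_mult_iff)
qed

end

section \<open>Short horizon: idling, then steering the first component\<close>

text \<open>
  Under the control \<open>(0,0)\<close> the mean \<open>m\<close> is conserved and the difference \<open>d\<close> decays like
  \<open>exp (-t)\<close>; after switching to \<open>(1,0)\<close> at time \<open>\<tau>\<close> the mean decays like \<open>m exp ((\<tau> - t)/2)\<close>.
\<close>
definition idle_state :: "real \<Rightarrow> real \<Rightarrow> real \<Rightarrow> real \<times> real" where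
  "idle_state m d t = (m + d * exp (- t) / 2, m - d * exp (- t) / 2)"

definition steered_state :: "real \<Rightarrow> real \<Rightarrow> real \<Rightarrow> real \<Rightarrow> real \<times> real" where
  "steered_state m d \<tau> t = (m * exp (\<tau> - t) + d * exp (- t) / 2,
                    2 * m * exp ((\<tau> - t) / 2) - m * exp (\<tau> - t) - d * exp (- t) / 2)"

definition steered_gap :: "real \<Rightarrow> real \<Rightarrow> real \<Rightarrow> real \<Rightarrow> real" where
  "steered_gap m d T \<tau> = 2 * m * exp (\<tau> - T) + d * exp (- T) - 2 * m * exp ((\<tau> - T) / 2)"

lemma trajectory_idle_then_steered:
  fixes x0 :: "real \<times> real"
  assumes "0 \<le> \<tau>"
  defines "m \<equiv> mean x0" and "d \<equiv> fst x0 - snd x0"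
  shows "trajectory T (\<lambda>t. if t < \<tau> then (0, 0) else (1, 0)) x0
           (\<lambda>t. if t < \<tau> then idle_state m d t else steered_state m d \<tau> t)"
proof (rule trajectory_switching)
  show "(idle_state m d has_vector_derivative dyn (0, 0) (idle_state m d s)) (at s)" for s
    unfolding idle_state_def
    by (auto simp: dyn_def mean_def field_simps intro!: has_vector_derivative_pair_real derivative_eq_intros)
  show "(steered_state m d \<tau> has_vector_derivative dyn (1, 0) (steered_state m d \<tau> s)) (at s)" for s
    unfolding steered_state_def
    by (auto simp: dyn_def mean_def field_simps intro!: has_vector_derivative_pair_real derivative_eq_intros)
  show "idle_state m d \<tau> = steered_state m d \<tau> \<tau>"
    by (simp add: idle_state_def steered_state_def)
  show "(if 0 < \<tau> then idle_state m d 0 else steered_state m d \<tau> 0) = x0"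
    using assms by (auto simp: idle_state_def steered_state_def m_def d_def mean_def prod_eq_iff field_simps)
qed

lemma cost_eq_mean_diff: "cost T \<eta> = mean (\<eta> T)^2 + (fst (\<eta> T) - snd (\<eta> T))^2 / 4"
  by (simp add: cost_def mean_def power2_eq_square field_simps)

lemma cost_idle_then_steered:
  assumes "\<tau> \<le> T"
  shows "cost T (\<lambda>t. if t < \<tau> then idle_state m d t else steered_state m d \<tau> t)
       = (m * exp ((\<tau> - T) / 2))^2 + (steered_gap m d T \<tau>)^2 / 4"
proof -
  have "mean (steered_state m d \<tau> T) = m * exp ((\<tau> - T) / 2)"
    "fst (steered_state m d \<tau> T) - snd (steered_state m d \<tau> T) = steered_gap m d T \<tau>"
    by (simp_all add: steered_state_def steered_gap_def mean_def field_simps)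
  then show ?thesis using assms unfolding cost_eq_mean_diff by simp
qed

locale short_horizon = optimal_control +
  assumes ordered: "\<forall>t\<in>{0..T}. snd (\<xi> t) \<le> fst (\<xi> t)"
    and initial_ordered: "snd x0 < fst x0"
    and short: "2 * mean x0 * exp (T / 2) < fst x0"
begin

abbreviation "mean0 \<equiv> mean x0"
abbreviation "diff0 \<equiv> fst x0 - snd x0"
abbreviation "meanT \<equiv> mean (\<xi> T)"
abbreviation "diffT \<equiv> fst (\<xi> T) - snd (\<xi> T)"

lemma cost_le_idle_then_steered:
  assumes "0 \<le> \<tau>" "\<tau> \<le> T"
  shows "meanT^2 + diffT^2 / 4 \<le> (mean0 * exp ((\<tau> - T) / 2))^2 + (steered_gap mean0 diff0 T \<tau>)^2 / 4"
proof -
  have "cost T \<xi> \<le> cost T (\<lambda>t. if t < \<tau> then idle_state mean0 diff0 t else steered_state mean0 diff0 \<tau> t)"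
    by (rule cost_le[OF admissible_switching trajectory_idle_then_steered[OF assms(1)]]) auto
  then show ?thesis using cost_idle_then_steered[OF assms(2)] unfolding cost_eq_mean_diff by simp
qed

lemma meanT_ge: "mean0 * exp (- T / 2) \<le> meanT"
proof (rule ccontr)
  assume "\<not> mean0 * exp (- T / 2) \<le> meanT"
  define b0 where "b0 = 2 * mean0 * exp (- T / 2) - fst x0 * exp (- T)"
  have "exp (T / 2) * exp (- T) = exp (- T / 2)" by (simp add: exp_add[symmetric])
  moreover have "2 * mean0 * exp (T / 2) * exp (- T) < fst x0 * exp (- T)" using short by simp
  ultimately have b0_neg: "b0 < 0" unfolding b0_def by (simp add: mult.assoc)
  have fst_ge: "fst x0 * exp (- T) \<le> fst (\<xi> T)"
    using trajectory_terminal_ge(1)[OF admissible trajectory mean_x0_pos] T_pos by simp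
  moreover have "snd (\<xi> T) = 2 * meanT - fst (\<xi> T)" by (simp add: mean_def field_simps)
  ultimately have "snd (\<xi> T) < b0"
    using \<open>\<not> mean0 * exp (- T / 2) \<le> meanT\<close> unfolding b0_def by linarith
  then have "(- b0)^2 < (- snd (\<xi> T))^2" using b0_neg by (intro power_strict_mono) auto
  then have "b0^2 < snd (\<xi> T)^2" by simp
  moreover have "(fst x0 * exp (- T))^2 \<le> fst (\<xi> T)^2"
    using fst_ge initial_ordered mean_x0_pos unfolding mean_def by (intro power_mono) auto
  moreover have "cost T \<xi> \<le> ((fst x0 * exp (- T))^2 + b0^2) / 2"
  proof -
    have "cost T \<xi> \<le> cost T (\<lambda>t. if t < 0 then idle_state mean0 diff0 t else steered_state mean0 diff0 0 t)"
      by (rule cost_le[OF admissible_switching trajectory_idle_then_steered]) auto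
    moreover have "steered_state mean0 diff0 0 T = (fst x0 * exp (- T), b0)"
      by (simp add: steered_state_def b0_def mean_def field_simps)
    ultimately show ?thesis using T_pos by (simp add: cost_def)
  qed
  ultimately show False unfolding cost_def by simp
qed

definition switch_point :: real where
  "switch_point = T + 2 * ln (meanT / mean0)"

lemma meanT_pos: "0 < meanT"
  using mean_pos T_pos by simp

lemma exp_half_switch_point: "exp ((switch_point - T) / 2) = meanT / mean0"
  unfolding switch_point_def using meanT_pos mean_x0_pos by simp

lemma switch_point_mean: "mean0 * exp ((switch_point - T) / 2) = meanT"
  using exp_half_switch_point mean_x0_pos by simp

lemma switch_point_le: "switch_point \<le> T"
proof -
  have "meanT \<le> mean0"
    using trajectory_mean_antimono[OF admissible trajectory mean_x0_pos, of 0 T] initial T_pos by simp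
  then show ?thesis unfolding switch_point_def using meanT_pos mean_x0_pos by (simp add: ln_div)
qed

lemma switch_point_nonneg: "0 \<le> switch_point"
proof -
  have "exp (- T / 2) \<le> meanT / mean0" using meanT_ge mean_x0_pos by (simp add: field_simps)
  then have "ln (exp (- T / 2)) \<le> ln (meanT / mean0)"
    using meanT_pos mean_x0_pos by (subst ln_le_cancel_iff) auto
  then show ?thesis unfolding switch_point_def by simp
qed

lemma idle_pairing_mono:
  assumes t: "t \<in> {0..T}"
  shows "diff0 \<le> exp t * (2 * mean0 - 2 * mean (\<xi> t) + (fst (\<xi> t) - snd (\<xi> t)))"
proof -
  have "((\<lambda>s. mean (\<xi> s) * ((-2 * exp s) - (-2 * exp s) * (fst (\<alpha> s) + snd (\<alpha> s)) / 2
                                + exp s * (snd (\<alpha> s) - fst (\<alpha> s))))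
    has_integral ((-2 * exp t) * mean (\<xi> t) + exp t * (fst (\<xi> t) - snd (\<xi> t))
                  - (-2 * exp 0) * mean (\<xi> 0) - exp 0 * (fst (\<xi> 0) - snd (\<xi> 0)))) {0..t}"
    by (rule trajectory_mean_diff_has_integral[OF admissible trajectory])
      (use t in \<open>auto intro!: derivative_eq_intros continuous_intros\<close>)
  moreover have "((\<lambda>s. 2 * mean0 * exp s) has_integral (2 * mean0 * exp t - 2 * mean0 * exp 0)) {0..t}"
    using t by (intro fundamental_theorem_of_calculus)
      (auto intro!: derivative_eq_intros simp: has_real_derivative_iff_has_vector_derivative[symmetric])
  ultimately have int: "((\<lambda>s. 2 * exp s * (mean0 - mean (\<xi> s) * (1 - snd (\<alpha> s)))) has_integral
      (exp t * (2 * mean0 - 2 * mean (\<xi> t) + (fst (\<xi> t) - snd (\<xi> t))) - diff0)) {0..t}"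
    by (rule has_integral_cong_rhs[OF has_integral_add]) (auto simp: initial mean_def field_simps)
  have "0 \<le> 2 * exp s * (mean0 - mean (\<xi> s) * (1 - snd (\<alpha> s)))" if "s \<in> {0..t}" for s
  proof -
    have s: "s \<in> {0..T}" using that t by auto
    have "mean (\<xi> s) * (1 - snd (\<alpha> s)) \<le> mean (\<xi> s)"
      using mean_pos[OF s] control_bounds[OF s] by (simp add: mult_left_le)
    moreover have "mean (\<xi> s) \<le> mean0"
      using trajectory_mean_antimono[OF admissible trajectory mean_x0_pos, of 0 s] s initial by simp
    ultimately show ?thesis by simp
  qed
  from has_integral_nonneg[OF int this] show ?thesis by simp
qed

text \<open>
  After a switch at \<open>\<tau>\<close> the costate of the steered competitor is
  \<open>(2 exp s - 4 exp (\<tau>/2) exp (s/2), exp s)\<close> in the coordinates (mean, difference).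
\<close>
definition after_switch_pairing :: "real \<Rightarrow> real \<Rightarrow> real" where
  "after_switch_pairing \<tau> s
     = (2 * exp s - 4 * exp (\<tau> / 2) * exp (s / 2)) * mean (\<xi> s) + exp s * (fst (\<xi> s) - snd (\<xi> s))"

definition after_switch_rate :: "real \<Rightarrow> real \<Rightarrow> real" where
  "after_switch_rate \<tau> s = mean (\<xi> s) * ((1 - fst (\<alpha> s)) * (2 * exp s - 2 * exp (\<tau> / 2) * exp (s / 2))
                                       + 2 * exp (\<tau> / 2) * snd (\<alpha> s) * exp (s / 2))"

lemma after_switch_has_integral:
  assumes "0 \<le> \<tau>" "\<tau> \<le> T"
  shows "(after_switch_rate \<tau> has_integral (after_switch_pairing \<tau> T - after_switch_pairing \<tau> \<tau>)) {\<tau>..T}"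
proof -
  have "((\<lambda>s. mean (\<xi> s) * ((2 * exp s - 2 * exp (\<tau> / 2) * exp (s / 2))
          - (2 * exp s - 4 * exp (\<tau> / 2) * exp (s / 2)) * (fst (\<alpha> s) + snd (\<alpha> s)) / 2
          + exp s * (snd (\<alpha> s) - fst (\<alpha> s))))
    has_integral ((2 * exp T - 4 * exp (\<tau> / 2) * exp (T / 2)) * mean (\<xi> T) + exp T * (fst (\<xi> T) - snd (\<xi> T))
       - (2 * exp \<tau> - 4 * exp (\<tau> / 2) * exp (\<tau> / 2)) * mean (\<xi> \<tau>) - exp \<tau> * (fst (\<xi> \<tau>) - snd (\<xi> \<tau>))))
    {\<tau>..T}"
    by (rule trajectory_mean_diff_has_integral[OF admissible trajectory assms order.refl])
      (auto intro!: derivative_eq_intros continuous_intros)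
  then show ?thesis
    by (rule has_integral_cong_rhs) (auto simp: after_switch_rate_def after_switch_pairing_def field_simps)
qed

lemma after_switch_rate_nonneg:
  assumes "\<tau> \<le> s" "s \<in> {0..T}"
  shows "0 \<le> after_switch_rate \<tau> s"
proof -
  have "exp (\<tau> / 2) \<le> exp (s / 2)" using assms by simp
  moreover have "exp s = exp (s / 2) * exp (s / 2)" by (simp add: exp_add[symmetric])
  ultimately have "0 \<le> 2 * exp s - 2 * exp (\<tau> / 2) * exp (s / 2)" by (simp add: mult_right_mono)
  then show ?thesis unfolding after_switch_rate_def using mean_pos[OF assms(2)] control_bounds[OF assms(2)]
    by (intro mult_nonneg_nonneg add_nonneg_nonneg) auto
qed

lemma pairing_balance:
  "exp switch_point * (2 * mean0 - 2 * mean (\<xi> switch_point) + (fst (\<xi> switch_point) - snd (\<xi> switch_point)))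
     - diff0 + (after_switch_pairing switch_point T - after_switch_pairing switch_point switch_point)
   = exp T * (diffT - steered_gap mean0 diff0 T switch_point)"
proof -
  define \<tau> where "\<tau> = switch_point"
  define k where "k = exp (\<tau> / 2)"
  have kk: "4 * k * k = 4 * exp \<tau>" unfolding k_def by (simp add: exp_add[symmetric])
  have kT: "k * exp (T / 2) * meanT = mean0 * exp \<tau>"
  proof -
    have "k * exp (T / 2) = exp T * (meanT / mean0)"
      unfolding k_def \<tau>_def exp_half_switch_point[symmetric] by (simp add: exp_add[symmetric] field_simps)
    then have "k * exp (T / 2) * meanT = mean0 * (exp T * (meanT / mean0) * (meanT / mean0))"
      using mean_x0_pos by (simp add: field_simps)
    also have "exp T * (meanT / mean0) * (meanT / mean0) = exp \<tau>"
      unfolding \<tau>_def exp_half_switch_point[symmetric] by (simp add: exp_add[symmetric] field_simps)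
    finally show ?thesis .
  qed
  have "2 * mean0 * exp ((\<tau> - T) / 2) = 2 * meanT"
    using switch_point_mean unfolding \<tau>_def by simp
  then have gap: "steered_gap mean0 diff0 T \<tau> = (2 * mean0 * exp \<tau> + diff0) / exp T - 2 * meanT"
    unfolding steered_gap_def by (simp add: exp_diff exp_minus field_simps)
  have "exp \<tau> * (2 * mean0 - 2 * mean (\<xi> \<tau>) + (fst (\<xi> \<tau>) - snd (\<xi> \<tau>))) - diff0
      + (after_switch_pairing \<tau> T - after_switch_pairing \<tau> \<tau>)
      = 2 * mean0 * exp \<tau> - diff0 - 4 * (k * exp (T / 2) * meanT) + 2 * exp T * meanT + exp T * diffT"
    unfolding after_switch_pairing_def \<tau>_def[symmetric] k_def[symmetric] kk
    by (simp add: algebra_simps)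
  also have "\<dots> = exp T * (diffT - steered_gap mean0 diff0 T \<tau>)"
    unfolding kT gap by (simp add: field_simps)
  finally show ?thesis unfolding \<tau>_def .
qed

lemma after_switch_increment_nonneg:
  "0 \<le> after_switch_pairing switch_point T - after_switch_pairing switch_point switch_point"
  by (rule has_integral_nonneg[OF after_switch_has_integral[OF switch_point_nonneg switch_point_le]])
    (use after_switch_rate_nonneg switch_point_nonneg in auto)

lemma steered_gap_le_diffT: "steered_gap mean0 diff0 T switch_point \<le> diffT"
proof -
  have "0 \<le> exp T * (diffT - steered_gap mean0 diff0 T switch_point)"
    using pairing_balance idle_pairing_mono[of switch_point] after_switch_increment_nonneg
      switch_point_nonneg switch_point_le by simp
  then show ?thesis by (simp add: zero_le_mult_iff)
qed

lemma steered_gap_nonneg: "0 \<le> steered_gap mean0 diff0 T switch_point"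
proof (rule ccontr)
  assume neg: "\<not> 0 \<le> steered_gap mean0 diff0 T switch_point"
  have "0 < steered_gap mean0 diff0 T 0"
  proof -
    have "exp (T / 2) * exp (- T) = exp (- T / 2)" by (simp add: exp_add[symmetric])
    moreover have "2 * mean0 * exp (T / 2) * exp (- T) < fst x0 * exp (- T)" using short by simp
    ultimately have "2 * mean0 * exp (- T / 2) < fst x0 * exp (- T)" by (simp add: mult.assoc)
    moreover have "steered_gap mean0 diff0 T 0 = 2 * fst x0 * exp (- T) - 2 * mean0 * exp (- T / 2)"
      by (simp add: steered_gap_def mean_def algebra_simps)
    moreover have "0 < fst x0 * exp (- T)"
      using initial_ordered mean_x0_pos unfolding mean_def by simp
    ultimately show ?thesis by linarith
  qed
  moreover have "continuous_on {0..switch_point} (steered_gap mean0 diff0 T)"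
    unfolding steered_gap_def[abs_def] by (intro continuous_intros) auto
  ultimately obtain x where x: "0 \<le> x" "x \<le> switch_point" "steered_gap mean0 diff0 T x = 0"
    using IVT2'[of "steered_gap mean0 diff0 T" switch_point 0 0] neg switch_point_nonneg by force
  then have "x < switch_point" using neg by (cases "x = switch_point") auto
  then have "mean0 * exp ((x - T) / 2) < meanT"
    using switch_point_mean mean_x0_pos by (metis divide_strict_right_mono exp_less_cancel_iff
        mult_strict_left_mono diff_strict_right_mono zero_less_numeral)
  then have "(mean0 * exp ((x - T) / 2))^2 < meanT^2"
    using mean_x0_pos by (intro power_strict_mono) auto
  moreover have "meanT^2 + diffT^2 / 4 \<le> (mean0 * exp ((x - T) / 2))^2"
    using cost_le_idle_then_steered[of x] x switch_point_le by simp
  ultimately show False using zero_le_power2[of diffT] by linarith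
qed

lemma diffT_eq_steered_gap: "diffT = steered_gap mean0 diff0 T switch_point"
proof (rule ccontr)
  assume "diffT \<noteq> steered_gap mean0 diff0 T switch_point"
  then have "steered_gap mean0 diff0 T switch_point < diffT" using steered_gap_le_diffT by simp
  then have "(steered_gap mean0 diff0 T switch_point)^2 < diffT^2"
    using steered_gap_nonneg by (intro power_strict_mono) auto
  moreover have "meanT^2 + diffT^2 / 4 \<le> meanT^2 + (steered_gap mean0 diff0 T switch_point)^2 / 4"
    using cost_le_idle_then_steered[OF switch_point_nonneg switch_point_le] switch_point_mean by simp
  ultimately show False by simp
qed

lemma after_switch_rate_integral_zero:
  "(after_switch_rate switch_point has_integral 0) {switch_point..T}"
proof -
  have "after_switch_pairing switch_point T - after_switch_pairing switch_point switch_point \<le> 0"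
    using pairing_balance idle_pairing_mono[of switch_point] diffT_eq_steered_gap
      switch_point_nonneg switch_point_le by simp
  then have "after_switch_pairing switch_point T - after_switch_pairing switch_point switch_point = 0"
    using after_switch_increment_nonneg by simp
  then show ?thesis using after_switch_has_integral[OF switch_point_nonneg switch_point_le] by simp
qed

text \<open>If the switch happened only at \<open>T\<close>, switching slightly earlier would be strictly cheaper.\<close>
lemma switch_point_less: "switch_point < T"
proof (rule ccontr)
  assume "\<not> switch_point < T"
  then have \<tau>T: "switch_point = T" using switch_point_le by simp
  define \<kappa> where "\<kappa> = (\<lambda>\<tau>. (mean0 * exp ((\<tau> - T) / 2)) * (mean0 * exp ((\<tau> - T) / 2))
                          + steered_gap mean0 diff0 T \<tau> * steered_gap mean0 diff0 T \<tau> / 4)"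
  have "(\<kappa> has_real_derivative (mean0 * mean0 + diff0 * exp (- T) * mean0 / 2)) (at T)"
    unfolding \<kappa>_def steered_gap_def by (rule derivative_eq_intros refl | simp)+
  moreover have "0 < mean0 * mean0 + diff0 * exp (- T) * mean0 / 2"
    using mean_x0_pos initial_ordered by (simp add: add_pos_pos)
  ultimately obtain e where e: "0 < e" "\<And>h. 0 < h \<Longrightarrow> h < e \<Longrightarrow> \<kappa> (T - h) < \<kappa> T"
    using DERIV_pos_inc_left by blast
  define h where "h = min (e / 2) T"
  have h: "0 < h" "h < e" "h \<le> T" using e T_pos unfolding h_def by auto
  have "meanT^2 + diffT^2 / 4 \<le> \<kappa> (T - h)"
    using cost_le_idle_then_steered[of "T - h"] h unfolding \<kappa>_def by (simp add: power2_eq_square)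
  also have "\<dots> < \<kappa> T" using e(2) h by simp
  also have "\<kappa> T = meanT^2 + diffT^2 / 4"
    using diffT_eq_steered_gap switch_point_mean unfolding \<kappa>_def \<tau>T by (simp add: power2_eq_square)
  finally show False by simp
qed

lemma AE_steering_after_switch: "AE t in lebesgue. t \<in> {switch_point..T} \<longrightarrow> \<alpha> t = (1, 0)"
proof -
  have "AE t in lebesgue. t \<in> {switch_point..T} \<longrightarrow> after_switch_rate switch_point t = 0"
    by (rule has_integral_zero_nonneg_AE[OF after_switch_rate_integral_zero])
      (use after_switch_rate_nonneg switch_point_nonneg in auto)
  then show ?thesis using AE_lebesgue_neq[of switch_point]
  proof eventually_elim
    case (elim t)
    show ?case
    proof
      assume "t \<in> {switch_point..T}"
      then have gt: "switch_point < t" and t: "t \<in> {0..T}" using elim switch_point_nonneg by auto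
      define k where "k = exp (switch_point / 2)"
      have "k < exp (t / 2)" unfolding k_def using gt by simp
      moreover have "exp t = exp (t / 2) * exp (t / 2)" by (simp add: exp_add[symmetric])
      ultimately have pos: "0 < 2 * exp t - 2 * k * exp (t / 2)" by (simp add: mult_strict_right_mono)
      have "(1 - fst (\<alpha> t)) * (2 * exp t - 2 * k * exp (t / 2)) + 2 * k * snd (\<alpha> t) * exp (t / 2) = 0"
        using elim \<open>t \<in> {switch_point..T}\<close> mean_pos[OF t] unfolding after_switch_rate_def k_def by auto
      moreover have "0 \<le> (1 - fst (\<alpha> t)) * (2 * exp t - 2 * k * exp (t / 2))"
        "0 \<le> 2 * k * snd (\<alpha> t) * exp (t / 2)"
        using control_bounds[OF t] pos unfolding k_def by auto
      ultimately have "(1 - fst (\<alpha> t)) * (2 * exp t - 2 * k * exp (t / 2)) = 0"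
        "2 * k * snd (\<alpha> t) * exp (t / 2) = 0" by linarith+
      then show "\<alpha> t = (1, 0)" using pos unfolding k_def by (simp add: prod_eq_iff)
    qed
  qed
qed

lemma mean_at_switch_point: "mean (\<xi> switch_point) = mean0"
proof -
  let ?\<tau> = switch_point
  have "((\<lambda>s. exp (s / 2) * mean (\<xi> s) * (1 - fst (\<alpha> s) - snd (\<alpha> s)) / 2) has_integral
      (exp (T / 2) * meanT - exp (?\<tau> / 2) * mean (\<xi> ?\<tau>))) {?\<tau>..T}"
    by (rule has_integral_cong_rhs[OF trajectory_product_has_integral[OF admissible trajectory
          switch_point_nonneg switch_point_le order.refl, of "\<lambda>s. exp (s / 2)" "\<lambda>s. exp (s / 2) / 2" "1/2" "1/2"]])
      (auto intro!: derivative_eq_intros continuous_intros simp: dyn_def mean_def field_simps)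
  then have "((\<lambda>s. 0) has_integral (exp (T / 2) * meanT - exp (?\<tau> / 2) * mean (\<xi> ?\<tau>))) {?\<tau>..T}"
    by (rule has_integral_AE_cong) (use AE_steering_after_switch in \<open>eventually_elim, auto\<close>)
  then have "exp (?\<tau> / 2) * mean (\<xi> ?\<tau>) = exp (T / 2) * meanT"
    using has_integral_unique[OF has_integral_0] by fastforce
  also have "\<dots> = exp (T / 2) * exp ((?\<tau> - T) / 2) * mean0"
    using switch_point_mean by (simp add: mult.commute mult.left_commute)
  also have "\<dots> = exp (?\<tau> / 2) * mean0" by (simp add: exp_add[symmetric] field_simps)
  finally show ?thesis by simp
qed

lemma AE_idle_before_switch: "AE t in lebesgue. t \<in> {0..<switch_point} \<longrightarrow> \<alpha> t = (0, 0)"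
proof -
  have "((\<lambda>s. - (- ((fst (\<alpha> s) + snd (\<alpha> s)) / 2 * mean (\<xi> s)))) has_integral
      - (mean (\<xi> switch_point) - mean (\<xi> 0))) {0..switch_point}"
    by (intro has_integral_neg trajectory_mean_has_integral[OF admissible trajectory]
        switch_point_nonneg switch_point_le order.refl)
  then have "((\<lambda>s. (fst (\<alpha> s) + snd (\<alpha> s)) / 2 * mean (\<xi> s)) has_integral 0) {0..switch_point}"
    using mean_at_switch_point initial by simp
  then have "AE t in lebesgue. t \<in> {0..switch_point} \<longrightarrow> (fst (\<alpha> t) + snd (\<alpha> t)) / 2 * mean (\<xi> t) = 0"
    by (rule has_integral_zero_nonneg_AE)
      (use control_bounds mean_pos switch_point_le in \<open>auto intro!: mult_nonneg_nonneg simp: less_imp_le\<close>)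
  then show ?thesis
  proof eventually_elim
    case (elim t)
    show ?case
    proof
      assume "t \<in> {0..<switch_point}"
      then have t: "t \<in> {0..T}" using switch_point_le by auto
      then have "fst (\<alpha> t) + snd (\<alpha> t) = 0" using elim mean_pos[OF t] \<open>t \<in> {0..<switch_point}\<close> by auto
      then show "\<alpha> t = (0, 0)" using control_bounds[OF t] by (auto simp: prod_eq_iff)
    qed
  qed
qed

lemma idle_then_steering:
  "\<exists>ts\<in>{0..<T}. AE t in lebesgue. (t \<in> {0..<ts} \<longrightarrow> \<alpha> t = (0, 0)) \<and> (t \<in> {ts..T} \<longrightarrow> \<alpha> t = (1, 0))"
  using AE_idle_before_switch AE_steering_after_switch switch_point_nonneg switch_point_less
  by (intro bexI[of _ switch_point]) (auto elim: AE_mp)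

end

theorem theorem3:
  fixes T :: real and x0 :: "real \<times> real"
    and \<alpha> \<xi> :: "real \<Rightarrow> real \<times> real"
  assumes "T > 0"
    and "mean x0 > 0"
    and "fst x0 > snd x0"
    and opt: "optimal T x0 \<alpha> \<xi>"
    and ord: "\<forall>t\<in>{0..T}. fst (\<xi> t) \<ge> snd (\<xi> t)"
  defines "t0 \<equiv> 2 * ln (fst x0 / (2 * mean x0))"
  shows "(snd x0 > 0 \<longrightarrow> (AE t in lebesgue. t \<in> {0..T} \<longrightarrow> \<alpha> t = (1, 1)))
       \<and> (snd x0 \<le> 0 \<and> T \<ge> t0 \<longrightarrow>
            snd (\<xi> T) = 0
          \<and> (AE t in lebesgue. t \<in> {0..T} \<longrightarrow> fst (\<alpha> t) = 1)
          \<and> (\<exists>\<eta>. optimal T x0 (\<lambda>t. if t < t0 then (1, 0) else (1, 1)) \<eta>)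
          \<and> (\<forall>tb\<in>{0..<T}. snd (\<xi> tb) = 0 \<longrightarrow> (\<forall>t\<in>{tb..T}. snd (\<xi> t) = 0)))
       \<and> (snd x0 \<le> 0 \<and> T < t0 \<longrightarrow>
            (\<exists>ts\<in>{0..<T}. AE t in lebesgue.
                 (t \<in> {0..<ts} \<longrightarrow> \<alpha> t = (0, 0)) \<and> (t \<in> {ts..T} \<longrightarrow> \<alpha> t = (1, 0))))"
proof -
  interpret optimal_control T x0 \<alpha> \<xi> using assms(1,2) opt by unfold_locales
  have t0: "t0 = switch_time x0" unfolding t0_def switch_time_def ..
  have x1: "0 < fst x0" using assms(2,3) by (simp add: mean_def)
  have long: "snd (\<xi> T) = 0
          \<and> (AE t in lebesgue. t \<in> {0..T} \<longrightarrow> fst (\<alpha> t) = 1)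
          \<and> (\<exists>\<eta>. optimal T x0 (\<lambda>t. if t < t0 then (1, 0) else (1, 1)) \<eta>)
          \<and> (\<forall>tb\<in>{0..<T}. snd (\<xi> tb) = 0 \<longrightarrow> (\<forall>t\<in>{tb..T}. snd (\<xi> t) = 0))"
    if "snd x0 \<le> 0" "t0 \<le> T"
    using long_horizon_terminal[OF that[unfolded t0]] snd_zero_persists
      AE_fst_control_one switching_control_optimal[OF mean_x0_pos that(1) _ that(2)[unfolded t0]] assms(1)
    unfolding t0 by (auto simp: exp_minus)
  have short: "\<exists>ts\<in>{0..<T}. AE t in lebesgue.
                 (t \<in> {0..<ts} \<longrightarrow> \<alpha> t = (0, 0)) \<and> (t \<in> {ts..T} \<longrightarrow> \<alpha> t = (1, 0))"
    if "T < t0"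
  proof -
    interpret short_horizon T x0 \<alpha> \<xi>
      using ord assms(3) that less_switch_time_iff[OF mean_x0_pos x1] unfolding t0 by unfold_locales auto
    show ?thesis by (rule idle_then_steering)
  qed
  show ?thesis using full_control_if_initial_pos[OF x1] long short by blast
qed

end
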